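(* Let $P$ be a finite set of $n$ points in a metric space $(X,d)$, $k\in[n]$, $\alpha\ge1$, and let $\{B(c_1,\alpha r(c_1)),\dots,B(c_m,\alpha r(c_m))\}$ be the balls output by Algorithm 1 on $(P,k,\alpha)$. If $S\subseteq P$ satisfies $S\cap B(c_i,\alpha r(c_i))\neq\emptyset$ for every $i\in[m]$, then for every $x\in P$, $d(x,S)\le 3\alpha\, r(x)$.
   Context: $B(v,\rho)=\{u\in P: d(v,u)\le\rho\}$; the fair radius $r(v)$ is the minimum $\rho\ge0$ with $|B(v,\rho)|\ge n/k$; $d(x,S)=\min_{s\in S}d(x,s)$. Algorithm 1: start with $Z=\emptyset$, $\mathcal{C}=\emptyset$; while $Z\ne P$, pick $c\in\arg\min_{x\in P\setminus Z}r(x)$, add $c$ to $\mathcal{C}$, and add to $Z$ every $x\in P\setminus Z$ with $d(x,c)\le 2\alpha r(x)$; output $\{B(c,\alpha r(c)):c\in\mathcal{C}\}$. *)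

theory Defs
  imports "HOL-Analysis.Analysis"
begin

definition ballP :: "'a::metric_space set \<Rightarrow> 'a \<Rightarrow> real \<Rightarrow> 'a set" where
  "ballP P v \<rho> = {u \<in> P. dist v u \<le> \<rho>}"

definition fair_radius :: "'a::metric_space set \<Rightarrow> nat \<Rightarrow> 'a \<Rightarrow> real" where
  "fair_radius P k v =
     (LEAST \<rho>. \<rho> \<ge> 0 \<and> real (card (ballP P v \<rho>)) \<ge> real (card P) / real k)"

text \<open>Reachable states (Z, C) of Algorithm 1 on (P,k,alpha), for any tie-breaking in the argmin.\<close>
inductive alg1_state :: "'a::metric_space set \<Rightarrow> nat \<Rightarrow> real \<Rightarrow> 'a set \<Rightarrow> 'a set \<Rightarrow> bool"
  for P k \<alpha> where
  init: "alg1_state P k \<alpha> {} {}"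
| step: "\<lbrakk> alg1_state P k \<alpha> Z C; Z \<noteq> P; c \<in> P - Z;
           \<forall>x \<in> P - Z. fair_radius P k c \<le> fair_radius P k x \<rbrakk>
         \<Longrightarrow> alg1_state P k \<alpha>
               (Z \<union> {x \<in> P - Z. dist x c \<le> 2 * \<alpha> * fair_radius P k x}) (C \<union> {c})"

text \<open>C is a set of centers output by Algorithm 1 (the loop terminated with Z = P).
  The output balls are ballP P c (alpha * fair_radius P k c) for c in C.\<close>
definition alg1_output :: "'a::metric_space set \<Rightarrow> nat \<Rightarrow> real \<Rightarrow> 'a set \<Rightarrow> bool" where
  "alg1_output P k \<alpha> C \<longleftrightarrow> alg1_state P k \<alpha> P C"

end

theory Submission
  imports Defs
begin

text \<open>Every point covered by Algorithm 1 is within 2\<alpha> r(x) of a chosen center c with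
  r(c) \<le> r(x); this holds since each center minimises r over the points not yet covered.
  A center's ball contains a point s of S, so d(x,S) \<le> d(x,c) + d(c,s) \<le> 2\<alpha> r(x) + \<alpha> r(c)
  \<le> 3\<alpha> r(x).\<close>

lemma alg1_state_covered_near_center:
  assumes "alg1_state P k \<alpha> Z C" and "x \<in> Z"
  obtains c where "c \<in> C" "dist x c \<le> 2 * \<alpha> * fair_radius P k x"
    "fair_radius P k c \<le> fair_radius P k x"
  using assms
proof (induction arbitrary: thesis rule: alg1_state.induct)
  case init
  then show ?case by simp
next
  case (step Z C c)
  show ?case
  proof (cases "x \<in> Z")
    case True
    then show ?thesis using step.IH step.prems(1) by blast
  next
    case False
    with step.prems(2) have "x \<in> P - Z" "dist x c \<le> 2 * \<alpha> * fair_radius P k x" by auto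
    then show ?thesis using step.hyps(4) step.prems(1) by blast
  qed
qed

theorem mainTheorem2:
  fixes P S C :: "'a::metric_space set" and k :: nat and \<alpha> :: real
  assumes "finite P"
    and "1 \<le> k" and "k \<le> card P"
    and "\<alpha> \<ge> 1"
    and "alg1_output P k \<alpha> C"
    and "S \<subseteq> P"
    and "\<forall>c \<in> C. S \<inter> ballP P c (\<alpha> * fair_radius P k c) \<noteq> {}"
  shows "\<forall>x \<in> P. infdist x S \<le> 3 * \<alpha> * fair_radius P k x"
proof
  fix x assume "x \<in> P"
  then obtain c where c: "c \<in> C" "dist x c \<le> 2 * \<alpha> * fair_radius P k x"
      "fair_radius P k c \<le> fair_radius P k x"
    using alg1_state_covered_near_center assms(5) unfolding alg1_output_def by blast
  obtain s where s: "s \<in> S" "dist c s \<le> \<alpha> * fair_radius P k c"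
    using assms(7) c(1) unfolding ballP_def by blast
  have "\<alpha> * fair_radius P k c \<le> \<alpha> * fair_radius P k x"
    using c(3) assms(4) by (simp add: mult_left_mono)
  have "infdist x S \<le> dist x s" using s(1) by (rule infdist_le)
  also have "\<dots> \<le> dist x c + dist c s" by (rule dist_triangle)
  also have "\<dots> \<le> 3 * \<alpha> * fair_radius P k x"
    using c(2) s(2) \<open>\<alpha> * fair_radius P k c \<le> \<alpha> * fair_radius P k x\<close> by linarith
  finally show "infdist x S \<le> 3 * \<alpha> * fair_radius P k x" .
qed

end
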